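(* Let $S$ be a poset and $S\otimes_i G_i$ a terminating ordered join, and let $Z\subseteq S$ be an upper set of $S$. If $G_i\simeq_0\mathbf{0}$ for all $i\in Z$, then $S\otimes_i G_i\simeq_0 (S\setminus Z)\otimes_i G_i$, where $S\setminus Z$ carries the induced order and the right-hand side is the ordered join of the games $G_i$, $i\in S\setminus Z$.
   Context: All games are impartial combinatorial games under normal play; a game is determined by its set of options, and $G \to G'$ means $G'$ is an option of $G$. A game is terminating if it admits no infinite sequence of moves. $\mathbf{0}$ denotes the game with no options. The Grundy number of a terminating game $G$ is the ordinal $\Gamma_0(G)=\operatorname{mex}\{\Gamma_0(G') : G\to G'\}$, where $\operatorname{mex}\Lambda$ is the least ordinal not in the set of ordinals $\Lambda$. Games $G,H$ are $0$-equivalent, $G\simeq_0 H$, if $\Gamma_0(G)=\Gamma_0(H)$. Ordered join: for a poset $S$ and a family $(G_i)_{i\in S}$ of games, $S \otimes_i G_i$ is the game whose options are exactly the ordered joins $S \otimes_i G'_i$ obtained by choosing one $i_0\in S$ and an option $G_{i_0}\to G'_{i_0}$, and setting $G'_i=\mathbf{0}$ for all $i>i_0$ and $G'_i=G_i$ for all other $i\ne i_0$. An upper set $Z\subseteq S$ is a subset such that $i\in Z$ and $i\le j$ imply $j\in Z$. *)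

theory Defs
  imports Main
begin

text \<open>Impartial games are represented as positions in a move graph:
  a position x of type 'p together with a move relation M, where M x y
  means that y is an option of x.  The game is the tree of positions
  reachable from x.\<close>

definition terminating :: "('p \<Rightarrow> 'p \<Rightarrow> bool) \<Rightarrow> 'p \<Rightarrow> bool" where
  "terminating M x \<longleftrightarrow> \<not> (\<exists>f. f 0 = x \<and> (\<forall>n. M (f n) (f (Suc n))))"

definition is_mex :: "'o::wellorder set \<Rightarrow> 'o \<Rightarrow> bool" where
  "is_mex A a \<longleftrightarrow> a \<notin> A \<and> (\<forall>b<a. b \<in> A)"

text \<open>Grundy values
  live in an arbitrary well-ordered type 'o (standing in for the ordinals).\<close>
definition grundy_fun :: "('p \<Rightarrow> 'p \<Rightarrow> bool) \<Rightarrow> ('p \<Rightarrow> 'o::wellorder) \<Rightarrow> bool" where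
  "grundy_fun M Gam \<longleftrightarrow>
     (\<forall>x. terminating M x \<longrightarrow> is_mex (Gam ` {y. M x y}) (Gam x))"

text \<open>The zero game: the unique position of type unit, with no moves.\<close>
definition zero_move :: "unit \<Rightarrow> unit \<Rightarrow> bool" where
  "zero_move x y \<longleftrightarrow> False"

text \<open>Ordered join over the index set T (with the order of type 'i restricted to T).
  A state assigns to every index i the current component game (Some g) or the
  zero game (None).\<close>
definition join_move :: "('a \<Rightarrow> 'a \<Rightarrow> bool) \<Rightarrow> 'i::order set
    \<Rightarrow> ('i \<Rightarrow> 'a option) \<Rightarrow> ('i \<Rightarrow> 'a option) \<Rightarrow> bool" where
  "join_move M T f f' \<longleftrightarrow>
     (\<exists>i0\<in>T. \<exists>g g'. f i0 = Some g \<and> M g g' \<and>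
        f' = (\<lambda>i. if i = i0 then Some g' else if i \<in> T \<and> i0 < i then None else f i))"

definition join_start :: "'i set \<Rightarrow> ('i \<Rightarrow> 'a) \<Rightarrow> ('i \<Rightarrow> 'a option)" where
  "join_start T G = (\<lambda>i. if i \<in> T then Some (G i) else None)"

end

theory Submission
  imports Defs
begin

text \<open>The components indexed by the upper set Z all have Grundy value 0, so
  any move in such a component i0 can be reversed: the resulting component
  has positive value, hence an option of value 0, and answering there
  leaves i0 at value 0 again while everything outside Z is untouched (the
  resets caused by i0 lie in Z).  Moves outside Z are mirrored exactly by
  moves of the join over S - Z.  By induction over the game, the Grundy value
  of a position of the join over S equals that of its restriction to S - Z
  as long as all components in Z have value 0.\<close>

lemma terminating_iff_termip: "terminating M x \<longleftrightarrow> termip M x"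
proof
  assume trm: "terminating M x"
  show "termip M x"
  proof (rule ccontr)
    assume "\<not> termip M x"
    have "\<exists>f. \<forall>n. (\<not> termip M (f n) \<and> (n = 0 \<longrightarrow> f n = x)) \<and> M (f n) (f (Suc n))"
    proof (rule dependent_nat_choice)
      fix y and n :: nat assume "\<not> termip M y \<and> (n = 0 \<longrightarrow> y = x)"
      then obtain z where "M\<inverse>\<inverse> z y" "\<not> termip M z" by (blast elim: not_accp_down)
      then show "\<exists>z. (\<not> termip M z \<and> (Suc n = 0 \<longrightarrow> z = x)) \<and> M y z" by auto
    qed (use \<open>\<not> termip M x\<close> in blast)
    then show False using trm unfolding terminating_def by blast
  qed
next
  assume "termip M x"
  then show "terminating M x"
  proof (induction rule: accp.induct)
    case (accI x)
    show ?case unfolding terminating_def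
    proof
      assume "\<exists>f. f 0 = x \<and> (\<forall>n. M (f n) (f (Suc n)))"
      then obtain f where f: "f 0 = x" "\<forall>n. M (f n) (f (Suc n))" by blast
      have "\<not> terminating M (f (Suc 0))"
        unfolding terminating_def using f(2) by (auto intro!: exI[of _ "\<lambda>n. f (Suc n)"])
      moreover have "terminating M (f (Suc 0))" using f by (intro accI.IH) auto
      ultimately show False by blast
    qed
  qed
qed

lemma termip_tranclp:
  assumes "termip M x" shows "termip M\<^sup>+\<^sup>+ x"
  using assms
proof (induction rule: accp.induct)
  case (accI x)
  show ?case
  proof (rule accp.accI)
    fix y assume "M\<^sup>+\<^sup>+\<inverse>\<inverse> y x"
    then have "M\<^sup>+\<^sup>+ x y" by simp
    then obtain z where "M x z" "M\<^sup>*\<^sup>* z y" by (blast dest: tranclpD)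
    moreover have "termip M\<^sup>+\<^sup>+ z" using \<open>M x z\<close> by (intro accI.IH) simp
    ultimately show "termip M\<^sup>+\<^sup>+ y"
      by (metis accp_downward conversepI rtranclpD)
  qed
qed

lemma terminating_tranclp_successor:
  assumes "terminating M x" "M\<^sup>+\<^sup>+ x y" shows "terminating M y"
proof -
  have "(M\<inverse>\<inverse>)\<^sup>+\<^sup>+ y x" using assms(2) by (simp add: tranclp_converse)
  then have "(M\<inverse>\<inverse>)\<^sup>*\<^sup>* y x" by (rule tranclp_into_rtranclp)
  with assms(1) show ?thesis unfolding terminating_iff_termip by (rule accp_downwards)
qed

lemma terminating_successor:
  assumes "terminating M x" "M x y" shows "terminating M y"
  using assms by (blast intro: terminating_tranclp_successor)

lemma terminating_induct [consumes 1, case_names less]: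
  assumes "terminating M x"
    and "\<And>x. terminating M x \<Longrightarrow> (\<And>y. M\<^sup>+\<^sup>+ x y \<Longrightarrow> P y) \<Longrightarrow> P x"
  shows "P x"
proof -
  have "termip M\<^sup>+\<^sup>+ x" using assms(1) by (simp add: terminating_iff_termip termip_tranclp)
  then have "terminating M x \<longrightarrow> P x"
  proof (induction rule: accp.induct)
    case (accI x)
    show ?case
    proof
      assume trm: "terminating M x"
      moreover have "P y" if "M\<^sup>+\<^sup>+ x y" for y
        using accI.IH[of y] that terminating_tranclp_successor[OF trm that] by simp
      ultimately show "P x" by (rule assms(2))
    qed
  qed
  then show ?thesis using assms(1) by blast
qed

lemma mex_unique:
  assumes "is_mex A a" "is_mex A b" shows "a = b"
  using assms unfolding is_mex_def by (cases a b rule: linorder_cases) blast+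

lemma grundy_mex:
  "grundy_fun M Gam \<Longrightarrow> terminating M x \<Longrightarrow> is_mex (Gam ` {y. M x y}) (Gam x)"
  unfolding grundy_fun_def by blast

lemma grundy_option_neq:
  assumes "grundy_fun M Gam" "terminating M x" "M x y" shows "Gam y \<noteq> Gam x"
proof
  assume "Gam y = Gam x"
  with assms(3) have "Gam x \<in> Gam ` {y. M x y}" by (metis image_eqI mem_Collect_eq)
  then show False using grundy_mex[OF assms(1,2)] by (simp add: is_mex_def)
qed

lemma grundy_option_below:
  assumes "grundy_fun M Gam" "terminating M x" "b < Gam x"
  obtains y where "M x y" "Gam y = b"
  using grundy_mex[OF assms(1,2)] assms(3) unfolding is_mex_def by blast

lemma grundy_eqI:
  assumes "grundy_fun M Gam" "terminating M x"
    and "\<And>y. M x y \<Longrightarrow> Gam y \<noteq> v"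
    and "\<And>b. b < v \<Longrightarrow> \<exists>y. M x y \<and> Gam y = b"
  shows "Gam x = v"
proof (rule mex_unique)
  show "is_mex (Gam ` {y. M x y}) (Gam x)" using assms(1,2) by (rule grundy_mex)
  show "is_mex (Gam ` {y. M x y}) v" using assms(3,4) unfolding is_mex_def by blast
qed

lemma grundy_zero_le:
  assumes "grundy_fun zero_move Gz" shows "Gz () \<le> b"
proof -
  have "terminating zero_move ()" unfolding terminating_def zero_move_def by simp
  then have "is_mex {} (Gz ())" using grundy_mex[OF assms] by (simp add: zero_move_def)
  then show ?thesis unfolding is_mex_def by (meson empty_iff not_le)
qed

lemma grundy_reverse:
  assumes gam: "grundy_fun M Gam" and "terminating M x" "\<And>b. Gam x \<le> b" "M x y"
  obtains z where "M y z" "Gam z = Gam x"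
proof -
  have "Gam x < Gam y"
    using grundy_option_neq[OF gam assms(2,4)] assms(3) by (simp add: order.not_eq_order_implies_strict)
  with terminating_successor[OF assms(2,4)] show ?thesis
    using gam that by (blast elim: grundy_option_below)
qed

definition join_update :: "'i::order set \<Rightarrow> 'i \<Rightarrow> 'a \<Rightarrow> ('i \<Rightarrow> 'a option) \<Rightarrow> ('i \<Rightarrow> 'a option)"
  where "join_update T i0 g f = (\<lambda>i. if i = i0 then Some g else if i \<in> T \<and> i0 < i then None else f i)"

definition join_restrict :: "'i set \<Rightarrow> ('i \<Rightarrow> 'a option) \<Rightarrow> ('i \<Rightarrow> 'a option)"
  where "join_restrict T f = (\<lambda>i. if i \<in> T then f i else None)"

lemma join_moveI:
  "i0 \<in> T \<Longrightarrow> f i0 = Some g \<Longrightarrow> M g g' \<Longrightarrow> join_move M T f (join_update T i0 g' f)"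
  unfolding join_move_def join_update_def by blast

lemma join_moveE:
  assumes "join_move M T f f'"
  obtains i0 g g' where "i0 \<in> T" "f i0 = Some g" "M g g'" "f' = join_update T i0 g' f"
  using assms unfolding join_move_def join_update_def by blast

lemma join_update_join_update: "join_update T i g' (join_update T i g f) = join_update T i g' f"
  by (auto simp: join_update_def)

lemma join_restrict_join_update:
  "i \<in> T \<Longrightarrow> T \<subseteq> S \<Longrightarrow> join_restrict T (join_update S i g f) = join_update T i g (join_restrict T f)"
  by (auto simp: join_restrict_def join_update_def fun_eq_iff)

lemma join_restrict_join_update_above:
  "\<forall>j\<in>T. \<not> i \<le> j \<Longrightarrow> join_restrict T (join_update S i g f) = join_restrict T f"
  by (auto simp: join_restrict_def join_update_def fun_eq_iff)

lemma join_restrict_join_start: "T \<subseteq> S \<Longrightarrow> join_restrict T (join_start S G) = join_start T G"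
  by (auto simp: join_restrict_def join_start_def fun_eq_iff)

lemma join_move_restrict_lift:
  assumes "T \<subseteq> S" "join_move M T (join_restrict T f) r"
  obtains i0 g' where "i0 \<in> T" "join_move M S f (join_update S i0 g' f)"
    "r = join_restrict T (join_update S i0 g' f)"
proof -
  obtain i0 g g' where i0: "i0 \<in> T" "join_restrict T f i0 = Some g" "M g g'"
    and r: "r = join_update T i0 g' (join_restrict T f)"
    using assms(2) by (rule join_moveE)
  have "join_move M S f (join_update S i0 g' f)"
    using i0 assms(1) by (intro join_moveI) (auto simp: join_restrict_def)
  then show ?thesis using that i0(1) r assms(1) by (simp add: join_restrict_join_update)
qed

lemma join_move_restrict_project:
  assumes "T \<subseteq> S" "i0 \<in> T" "f i0 = Some g" "M g g'"
  shows "join_move M T (join_restrict T f) (join_restrict T (join_update S i0 g' f))"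
proof -
  have "join_move M T (join_restrict T f) (join_update T i0 g' (join_restrict T f))"
    using assms(2-4) by (intro join_moveI) (simp_all add: join_restrict_def)
  with assms(1,2) show ?thesis by (simp add: join_restrict_join_update)
qed

lemma terminating_join_restrict:
  assumes "T \<subseteq> S" "terminating (join_move M S) f"
  shows "terminating (join_move M T) (join_restrict T f)"
proof -
  have "termip (join_move M S) f" using assms(2) by (simp add: terminating_iff_termip)
  then have "termip (join_move M T) (join_restrict T f)"
  proof (induction rule: accp.induct)
    case (accI f)
    show ?case
    proof (rule accp.accI)
      fix r assume "(join_move M T)\<inverse>\<inverse> r (join_restrict T f)"
      then obtain i0 g' where "join_move M S f (join_update S i0 g' f)"
        "r = join_restrict T (join_update S i0 g' f)"
        using assms(1) by (auto elim: join_move_restrict_lift)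
      then show "termip (join_move M T) r" using accI.IH by (blast intro: conversepI)
    qed
  qed
  then show ?thesis by (simp add: terminating_iff_termip)
qed

lemma terminating_join_component:
  assumes "terminating (join_move M S) f" "i \<in> S" "f i = Some g"
  shows "terminating M g"
proof -
  have "termip (join_move M S) f" using assms(1) by (simp add: terminating_iff_termip)
  then have "\<forall>g. f i = Some g \<longrightarrow> termip M g"
  proof (induction rule: accp.induct)
    case (accI f)
    show ?case
    proof (intro allI impI)
      fix g assume "f i = Some g"
      show "termip M g"
      proof (rule accp.accI)
        fix g' assume "M\<inverse>\<inverse> g' g"
        then have "join_move M S f (join_update S i g' f)"
          using assms(2) \<open>f i = Some g\<close> by (intro join_moveI) auto
        moreover have "join_update S i g' f i = Some g'" by (simp add: join_update_def)
        ultimately show "termip M g'" using accI.IH by (blast intro: conversepI)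
      qed
    qed
  qed
  then show ?thesis using assms(3) by (simp add: terminating_iff_termip)
qed

lemma join_move_reverse:
  assumes gam: "grundy_fun M Gam" and least: "\<And>b. c \<le> b"
    and "terminating (join_move M S) f" "i0 \<in> S" "f i0 = Some g" "Gam g = c" "M g g'"
  obtains g'' where "join_move M S (join_update S i0 g' f) (join_update S i0 g'' f)" "Gam g'' = c"
proof -
  have "terminating M g" using assms(3-5) by (rule terminating_join_component)
  then obtain g'' where "M g' g''" "Gam g'' = c"
    using gam assms(6,7) least by (blast elim: grundy_reverse)
  moreover have "join_move M S (join_update S i0 g' f) (join_update S i0 g'' (join_update S i0 g' f))"
    using assms(4) \<open>M g' g''\<close> by (intro join_moveI) (simp_all add: join_update_def)
  ultimately show ?thesis using that by (simp add: join_update_join_update)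
qed

definition vanishes_on :: "('a \<Rightarrow> 'o) \<Rightarrow> 'o \<Rightarrow> 'i set \<Rightarrow> ('i \<Rightarrow> 'a option) \<Rightarrow> bool"
  where "vanishes_on Gam c Z f \<longleftrightarrow> (\<forall>i\<in>Z. \<forall>g. f i = Some g \<longrightarrow> Gam g = c)"

lemma vanishes_on_join_update:
  "vanishes_on Gam c Z f \<Longrightarrow> (i \<in> Z \<Longrightarrow> Gam g = c) \<Longrightarrow> vanishes_on Gam c Z (join_update S i g f)"
  by (auto simp: vanishes_on_def join_update_def)

lemma join_move_reverse_upper:
  fixes S Z :: "'i::order set"
  assumes upper: "\<forall>i\<in>Z. \<forall>j\<in>S. i \<le> j \<longrightarrow> j \<in> Z"
    and gc: "grundy_fun M Gc" and least: "\<And>b. c \<le> b"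
    and "terminating (join_move M S) f" "vanishes_on Gc c Z f"
    and "i0 \<in> Z" "i0 \<in> S" "f i0 = Some g" "M g g'"
  obtains f'' where "join_move M S (join_update S i0 g' f) f''" "vanishes_on Gc c Z f''"
    "join_restrict (S - Z) f'' = join_restrict (S - Z) f"
proof -
  have "Gc g = c" using assms(5,6,8) by (simp add: vanishes_on_def)
  then obtain g'' where "join_move M S (join_update S i0 g' f) (join_update S i0 g'' f)" "Gc g'' = c"
    using join_move_reverse[OF gc least assms(4,7,8) _ assms(9)] by blast
  moreover have "join_restrict (S - Z) (join_update S i0 g'' f) = join_restrict (S - Z) f"
    using assms(6) upper by (intro join_restrict_join_update_above) auto
  ultimately show ?thesis using that vanishes_on_join_update[OF assms(5)] by blast
qed

lemma join_grundy_restrict_upper: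
  fixes S Z :: "'i::order set"
  assumes upper: "\<forall>i\<in>Z. \<forall>j\<in>S. i \<le> j \<longrightarrow> j \<in> Z"
    and gc: "grundy_fun M Gc" and least: "\<And>b. c \<le> b"
    and gS: "grundy_fun (join_move M S) GS"
    and gSZ: "grundy_fun (join_move M (S - Z)) GSZ"
    and "terminating (join_move M S) f" "vanishes_on Gc c Z f"
  shows "GS f = GSZ (join_restrict (S - Z) f)"
  using assms(6,7)
proof (induction f rule: terminating_induct)
  case (less f)
  let ?J = "join_move M S" and ?JZ = "join_move M (S - Z)" and ?r = "join_restrict (S - Z)"
  have termZ: "terminating ?JZ (?r f)" using terminating_join_restrict[OF Diff_subset less.hyps] .
  show ?case
  proof (rule grundy_eqI[OF gS less.hyps])
    fix f' assume mv: "?J f f'"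
    then obtain i0 g g' where i0: "i0 \<in> S" "f i0 = Some g" "M g g'" and f': "f' = join_update S i0 g' f"
      by (rule join_moveE)
    have trcl: "?J\<^sup>+\<^sup>+ f f'" using mv by blast
    show "GS f' \<noteq> GSZ (?r f)"
    proof (cases "i0 \<in> Z")
      case False
      have "?JZ (?r f) (?r f')"
        unfolding f' using i0 False by (intro join_move_restrict_project) auto
      moreover have "vanishes_on Gc c Z f'"
        unfolding f' by (rule vanishes_on_join_update[OF less.prems]) (use False in blast)
      then have "GS f' = GSZ (?r f')" using less.IH[OF trcl] by blast
      ultimately show ?thesis using grundy_option_neq[OF gSZ termZ] by simp
    next
      case True
      then obtain f'' where mv': "?J f' f''" and "vanishes_on Gc c Z f''" and "?r f'' = ?r f"
        unfolding f' using join_move_reverse_upper[OF upper gc least less.hyps less.prems _ i0] by blast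
      moreover have "?J\<^sup>+\<^sup>+ f f''" using trcl mv' by auto
      ultimately have "GS f'' = GSZ (?r f)" using less.IH[of f''] by simp
      moreover have "terminating ?J f'" using mv by (rule terminating_successor[OF less.hyps])
      then have "GS f'' \<noteq> GS f'" using mv' by (rule grundy_option_neq[OF gS])
      ultimately show ?thesis by simp
    qed
  next
    fix b assume "b < GSZ (?r f)"
    then obtain r where r: "?JZ (?r f) r" "GSZ r = b"
      by (rule grundy_option_below[OF gSZ termZ])
    obtain i0 g' where "i0 \<in> S - Z" and mv: "?J f (join_update S i0 g' f)"
      and "r = ?r (join_update S i0 g' f)"
      using join_move_restrict_lift[OF Diff_subset r(1)] .
    moreover have "vanishes_on Gc c Z (join_update S i0 g' f)"
      by (rule vanishes_on_join_update[OF less.prems]) (use \<open>i0 \<in> S - Z\<close> in blast)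
    ultimately have "GS (join_update S i0 g' f) = b"
      using less.IH[of "join_update S i0 g' f"] r(2) by blast
    with mv show "\<exists>f'. ?J f f' \<and> GS f' = b" by blast
  qed
qed

theorem mainTheorem7:
  fixes S Z :: "'i::order set"
    and M :: "'a \<Rightarrow> 'a \<Rightarrow> bool"
    and G :: "'i \<Rightarrow> 'a"
    and Gc :: "'a \<Rightarrow> 'o::wellorder"
    and Gz :: "unit \<Rightarrow> 'o"
    and GS :: "('i \<Rightarrow> 'a option) \<Rightarrow> 'o"
    and GSZ :: "('i \<Rightarrow> 'a option) \<Rightarrow> 'o"
  assumes upper: "Z \<subseteq> S" "\<forall>i\<in>Z. \<forall>j\<in>S. i \<le> j \<longrightarrow> j \<in> Z"
    and trm: "terminating (join_move M S) (join_start S G)"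
    and gc: "grundy_fun M Gc"
    and gz: "grundy_fun zero_move Gz"
    and gS: "grundy_fun (join_move M S) GS"
    and gSZ: "grundy_fun (join_move M (S - Z)) GSZ"
    and zero: "\<forall>i\<in>Z. Gc (G i) = Gz ()"
  shows "GS (join_start S G) = GSZ (join_start (S - Z) G)"
proof -
  have "vanishes_on Gc (Gz ()) Z (join_start S G)"
    using zero upper(1) by (auto simp: vanishes_on_def join_start_def)
  with join_grundy_restrict_upper[OF upper(2) gc grundy_zero_le[OF gz] gS gSZ trm]
  show ?thesis by (simp add: join_restrict_join_start)
qed

end
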